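(* Let $G$ be an $n$-dimensional Lie group with identity $e$ and Lie algebra $\mathfrak g = T_eG$, and let $\mathcal U=\mathbb R^m$, $\mathcal Y=\mathbb R^p$. Consider the system $\frac{d}{dt}x = f(x,u)$, $y=h(x,u)$ with $x\in G$, $u\in\mathcal U$, $y\in\mathcal Y$, where $f(\cdot,u)$ is a smooth vector field on $G$ and $h$ is smooth. Suppose $G$ acts smoothly on the left on $\mathcal U$ and on $\mathcal Y$ via maps $\psi_g:\mathcal U\to\mathcal U$ and $\rho_g:\mathcal Y\to\mathcal Y$, and that the system is left-invariant with equivariant output, i.e. for all $g,x\in G$, $u\in\mathcal U$: $f(gx,\psi_g(u)) = DL_g f(x,u)$ and $h(gx,\psi_g(u))=\rho_g(h(x,u))$, where $L_g:x\mapsto gx$. Fix a basis $W_1,\dots,W_n$ of $\mathfrak g$. Then any $G$-invariant pre-observer $\frac{d}{dt}\hat x = F(\hat x,u,y)$ of this system (i.e. $F(x,u,h(x,u))=f(x,u)$ for all $(x,u)$, and $F(g\hat x,\psi_g(u),\rho_g(y)) = DL_gF(\hat x,u,y)$ for all $g,\hat x,u,y$) is of the form $$\frac{d}{dt}\hat x = f(\hat x,u) + DL_{\hat x}\Big(\sum_{i=1}^n \mathcal L_i\big(\psi_{\hat x^{-1}}(u),\rho_{\hat x^{-1}}(y)\big)W_i\Big),$$ where $\mathcal L_1,\dots,\mathcal L_n$ are scalar functions of their arguments satisfying $\mathcal L_i\big(v, h(e,v)\big)=0$ for all $v\in\mathcal U$.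
   Context: $DL_g$ denotes the differential of left multiplication $L_g$, mapping $T_xG$ to $T_{gx}G$. A left group action $(\phi_g)_{g\in G}$ on a set $\Sigma$ is a smooth map $(g,\xi)\mapsto\phi_g(\xi)$ with $\phi_e=\mathrm{id}$ and $\phi_{g_2}\circ\phi_{g_1}=\phi_{g_2g_1}$. *)

theory Defs
  imports "HOL-Analysis.Analysis"
begin

fun Ck_on :: "nat \<Rightarrow> 'a::euclidean_space set \<Rightarrow> ('a \<Rightarrow> 'b::euclidean_space) \<Rightarrow> bool" where
  "Ck_on 0 U f = continuous_on U f"
| "Ck_on (Suc k) U f =
     (f differentiable_on U \<and> (\<forall>v. Ck_on k U (\<lambda>x. frechet_derivative f (at x) v)))"

definition smooth_on :: "'a::euclidean_space set \<Rightarrow> ('a \<Rightarrow> 'b::euclidean_space) \<Rightarrow> bool" where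
  "smooth_on U f \<longleftrightarrow> open U \<and> (\<forall>k. Ck_on k U f)"

definition smooth_map_on :: "'a::euclidean_space set \<Rightarrow> ('a \<Rightarrow> 'b::euclidean_space) \<Rightarrow> bool" where
  "smooth_map_on S f \<longleftrightarrow>
     (\<forall>x\<in>S. \<exists>U F. x \<in> U \<and> smooth_on U F \<and> (\<forall>y\<in>S \<inter> U. F y = f y))"

definition submanifold :: "'a::euclidean_space set \<Rightarrow> nat \<Rightarrow> bool" where
  "submanifold M n \<longleftrightarrow>
     (\<exists>B. B \<subseteq> (Basis :: 'a set) \<and> card B = n \<and>
       (\<forall>x\<in>M. \<exists>U V (\<phi>::'a \<Rightarrow> 'a) \<phi>'. x \<in> U \<and> smooth_on U \<phi> \<and> smooth_on V \<phi>' \<and>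
           \<phi> ` U = V \<and> (\<forall>y\<in>U. \<phi>' (\<phi> y) = y) \<and> (\<forall>z\<in>V. \<phi> (\<phi>' z) = z) \<and>
           \<phi> ` (M \<inter> U) = V \<inter> span B))"

definition curve_through :: "'a::euclidean_space set \<Rightarrow> 'a \<Rightarrow> (real \<Rightarrow> 'a) \<Rightarrow> bool" where
  "curve_through M x \<gamma> \<longleftrightarrow> smooth_on UNIV \<gamma> \<and> (\<forall>t. \<gamma> t \<in> M) \<and> \<gamma> 0 = x"

definition tangent_space :: "'a::euclidean_space set \<Rightarrow> 'a \<Rightarrow> 'a set" where
  "tangent_space M x = {v. \<exists>\<gamma>. curve_through M x \<gamma> \<and> (\<gamma> has_vector_derivative v) (at 0)}"

definition differential :: "'a::euclidean_space set \<Rightarrow> ('a \<Rightarrow> 'b::euclidean_space) \<Rightarrow> 'a \<Rightarrow> 'a \<Rightarrow> 'b" where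
  "differential M f x v = (THE w. \<forall>\<gamma>. curve_through M x \<gamma> \<and> (\<gamma> has_vector_derivative v) (at 0)
       \<longrightarrow> ((f \<circ> \<gamma>) has_vector_derivative w) (at 0))"

definition lie_group ::
  "'a::euclidean_space set \<Rightarrow> nat \<Rightarrow> ('a \<Rightarrow> 'a \<Rightarrow> 'a) \<Rightarrow> ('a \<Rightarrow> 'a) \<Rightarrow> 'a \<Rightarrow> bool" where
  "lie_group G n mul iv e \<longleftrightarrow>
     submanifold G n \<and> e \<in> G \<and>
     (\<forall>x\<in>G. \<forall>y\<in>G. mul x y \<in> G) \<and> (\<forall>x\<in>G. iv x \<in> G) \<and>
     (\<forall>x\<in>G. \<forall>y\<in>G. \<forall>z\<in>G. mul (mul x y) z = mul x (mul y z)) \<and>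
     (\<forall>x\<in>G. mul e x = x \<and> mul x e = x) \<and>
     (\<forall>x\<in>G. mul (iv x) x = e \<and> mul x (iv x) = e) \<and>
     smooth_map_on (G \<times> G) (\<lambda>(x, y). mul x y) \<and> smooth_map_on G iv"

definition DL :: "'a::euclidean_space set \<Rightarrow> ('a \<Rightarrow> 'a \<Rightarrow> 'a) \<Rightarrow> 'a \<Rightarrow> 'a \<Rightarrow> 'a \<Rightarrow> 'a" where
  "DL G mul g x v = differential G (mul g) x v"

definition smooth_left_action ::
  "'a::euclidean_space set \<Rightarrow> ('a \<Rightarrow> 'a \<Rightarrow> 'a) \<Rightarrow> 'a \<Rightarrow> ('a \<Rightarrow> 'b::euclidean_space \<Rightarrow> 'b) \<Rightarrow> bool" where
  "smooth_left_action G mul e \<phi> \<longleftrightarrow>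
     smooth_map_on (G \<times> UNIV) (\<lambda>(g, \<xi>). \<phi> g \<xi>) \<and>
     (\<forall>\<xi>. \<phi> e \<xi> = \<xi>) \<and>
     (\<forall>g1\<in>G. \<forall>g2\<in>G. \<forall>\<xi>. \<phi> g2 (\<phi> g1 \<xi>) = \<phi> (mul g2 g1) \<xi>)"

end

theory Submission
  imports Defs
begin

text \<open>Evaluating F at a point x and pulling back by the left translation L_x reduces F to its
  values at the identity, where F(e,v,w) - f(e,v) is a tangent vector at e; its coordinates in the
  basis W give the functions L_i. They vanish at w = h(e,v) because F is a pre-observer, and
  linearity of DL_x turns the coordinate expansion back into F(x,u,y) - f(x,u).\<close>

lemma sum_representation_image_eq:
  fixes W :: "'i \<Rightarrow> 'a::real_vector"
  assumes "finite I" "inj_on W I" "independent (W ` I)" "t \<in> span (W ` I)"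
  shows "(\<Sum>i\<in>I. representation (W ` I) t (W i) *\<^sub>R W i) = t"
proof -
  have "(\<Sum>i\<in>I. representation (W ` I) t (W i) *\<^sub>R W i)
      = (\<Sum>b\<in>W ` I. representation (W ` I) t b *\<^sub>R b)"
    by (simp add: sum.reindex[OF \<open>inj_on W I\<close>])
  also have "\<dots> = t"
    using assms by (intro real_vector.sum_representation_eq) auto
  finally show ?thesis .
qed

lemma differential_eq_derivative:
  fixes M :: "'a::euclidean_space set" and \<phi> :: "'a \<Rightarrow> 'b::euclidean_space"
  assumes deriv: "(\<Phi> has_derivative \<Phi>') (at p)"
    and "open U" "p \<in> U" and extends: "\<forall>y\<in>M \<inter> U. \<Phi> y = \<phi> y"
    and v: "v \<in> tangent_space M p"
  shows "differential M \<phi> p v = \<Phi>' v"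
proof -
  have curve_deriv: "((\<phi> \<circ> \<gamma>) has_vector_derivative \<Phi>' v) (at 0)"
    if \<gamma>: "curve_through M p \<gamma>" and \<gamma>': "(\<gamma> has_vector_derivative v) (at 0)" for \<gamma>
  proof -
    have "\<gamma> differentiable_on UNIV"
      using \<gamma> unfolding curve_through_def smooth_on_def by (metis Ck_on.simps(2))
    hence "continuous_on UNIV \<gamma>"
      by (rule differentiable_imp_continuous_on)
    hence "open (\<gamma> -` U)"
      using \<open>open U\<close> by (simp add: open_vimage)
    moreover have "0 \<in> \<gamma> -` U" and "\<forall>t. \<gamma> t \<in> M"
      using \<gamma> \<open>p \<in> U\<close> unfolding curve_through_def by auto
    moreover have "((\<Phi> \<circ> \<gamma>) has_vector_derivative \<Phi>' v) (at 0)"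
      using \<gamma> deriv unfolding curve_through_def
      by (intro vector_derivative_diff_chain_within[OF \<gamma>'])
         (auto intro: has_derivative_at_withinI)
    ultimately show ?thesis
      using extends by (auto intro: has_vector_derivative_transform_within_open)
  qed
  obtain \<gamma> where "curve_through M p \<gamma>" "(\<gamma> has_vector_derivative v) (at 0)"
    using v unfolding tangent_space_def by blast
  then show ?thesis
    unfolding differential_def
    by (intro the_equality) (auto intro: curve_deriv dest: vector_derivative_unique_at curve_deriv)
qed

lemma DL_linear_on_tangent_space:
  assumes mul: "smooth_map_on (G \<times> G) (\<lambda>(x, y). mul x y)" and "x \<in> G" "y \<in> G"
  shows "\<exists>D. linear D \<and> (\<forall>v\<in>tangent_space G y. DL G mul x y v = D v)"
proof -
  obtain U M where "(x, y) \<in> U" and M: "smooth_on U M"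
    and extends: "\<forall>p\<in>(G \<times> G) \<inter> U. M p = (\<lambda>(x, y). mul x y) p"
    using mul \<open>x \<in> G\<close> \<open>y \<in> G\<close> unfolding smooth_map_on_def by blast
  have "open U"
    using M unfolding smooth_on_def by blast
  moreover have "M differentiable_on U"
    using M unfolding smooth_on_def by (metis Ck_on.simps(2))
  ultimately have M': "(M has_derivative frechet_derivative M (at (x, y))) (at (x, y))"
    using \<open>(x, y) \<in> U\<close> by (simp add: differentiable_on_eq_differentiable_at frechet_derivative_works)
  define D where "D = frechet_derivative M (at (x, y)) \<circ> Pair 0"
  have "(Pair x has_derivative Pair 0) (at y)"
    by (rule has_derivative_Pair[OF has_derivative_const has_derivative_ident])
  then have D: "((M \<circ> Pair x) has_derivative D) (at y)"
    unfolding D_def using M' by (intro diff_chain_at) auto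
  have "open (Pair x -` U)"
    using \<open>open U\<close> by (auto intro!: open_vimage continuous_intros)
  moreover have "\<forall>z\<in>G \<inter> Pair x -` U. (M \<circ> Pair x) z = mul x z"
    using extends \<open>x \<in> G\<close> by auto
  ultimately have "\<forall>v\<in>tangent_space G y. DL G mul x y v = D v"
    unfolding DL_def using \<open>(x, y) \<in> U\<close> by (blast intro: differential_eq_derivative[OF D])
  with has_derivative_linear[OF D] show ?thesis by blast
qed

lemma smooth_left_action_inverse_cancel:
  assumes "lie_group G n mul iv e" "smooth_left_action G mul e \<phi>" "x \<in> G"
  shows "\<phi> x (\<phi> (iv x) \<xi>) = \<xi>"
proof -
  have "iv x \<in> G" and "mul x (iv x) = e"
    using assms(1,3) unfolding lie_group_def by auto
  with assms(2,3) show ?thesis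
    unfolding smooth_left_action_def by auto
qed

theorem mainTheorem1:
  fixes G :: "'a::euclidean_space set" and n :: nat
    and mul :: "'a \<Rightarrow> 'a \<Rightarrow> 'a" and iv :: "'a \<Rightarrow> 'a" and e :: 'a
    and f :: "'a \<Rightarrow> real^'m \<Rightarrow> 'a"
    and h :: "'a \<Rightarrow> real^'m \<Rightarrow> real^'p"
    and \<psi> :: "'a \<Rightarrow> real^'m \<Rightarrow> real^'m"
    and \<rho> :: "'a \<Rightarrow> real^'p \<Rightarrow> real^'p"
    and W :: "nat \<Rightarrow> 'a"
    and F :: "'a \<Rightarrow> real^'m \<Rightarrow> real^'p \<Rightarrow> 'a"
  assumes LG: "lie_group G n mul iv e"
    and f_tangent: "\<forall>x\<in>G. \<forall>u. f x u \<in> tangent_space G x"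
    and f_smooth: "smooth_map_on (G \<times> UNIV) (\<lambda>(x, u). f x u)"
    and h_smooth: "smooth_map_on (G \<times> UNIV) (\<lambda>(x, u). h x u)"
    and \<psi>_action: "smooth_left_action G mul e \<psi>"
    and \<rho>_action: "smooth_left_action G mul e \<rho>"
    and f_inv: "\<forall>g\<in>G. \<forall>x\<in>G. \<forall>u. f (mul g x) (\<psi> g u) = DL G mul g x (f x u)"
    and h_equiv: "\<forall>g\<in>G. \<forall>x\<in>G. \<forall>u. h (mul g x) (\<psi> g u) = \<rho> g (h x u)"
    and W_in: "\<forall>i\<in>{1..n}. W i \<in> tangent_space G e"
    and W_inj: "inj_on W {1..n}"
    and W_indep: "independent (W ` {1..n})"
    and W_span: "span (W ` {1..n}) = tangent_space G e"
    and F_tangent: "\<forall>x\<in>G. \<forall>u y. F x u y \<in> tangent_space G x"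
    and F_smooth: "smooth_map_on (G \<times> UNIV) (\<lambda>(x, u, y). F x u y)"
    and F_pre: "\<forall>x\<in>G. \<forall>u. F x u (h x u) = f x u"
    and F_inv: "\<forall>g\<in>G. \<forall>x\<in>G. \<forall>u y.
                  F (mul g x) (\<psi> g u) (\<rho> g y) = DL G mul g x (F x u y)"
  shows "\<exists>L :: nat \<Rightarrow> real^'m \<Rightarrow> real^'p \<Rightarrow> real.
           (\<forall>i\<in>{1..n}. \<forall>v. L i v (h e v) = 0) \<and>
           (\<forall>x\<in>G. \<forall>u y. F x u y =
              f x u + DL G mul x e (\<Sum>i=1..n. L i (\<psi> (iv x) u) (\<rho> (iv x) y) *\<^sub>R W i))"
proof -
  have eG: "e \<in> G" and mul_smooth: "smooth_map_on (G \<times> G) (\<lambda>(x, y). mul x y)"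
    using LG unfolding lie_group_def by blast+
  define L where "L i v w = representation (W ` {1..n}) (F e v w - f e v) (W i)" for i v w
  have F_e: "F e v w \<in> span (W ` {1..n})" and f_e: "f e v \<in> span (W ` {1..n})" for v w
    using F_tangent f_tangent eG W_span by auto
  have L_expansion: "(\<Sum>i=1..n. L i v w *\<^sub>R W i) = F e v w - f e v" for v w
    unfolding L_def using W_inj W_indep span_diff[OF F_e f_e]
    by (intro sum_representation_image_eq) auto
  have "F x u y = f x u + DL G mul x e (\<Sum>i=1..n. L i (\<psi> (iv x) u) (\<rho> (iv x) y) *\<^sub>R W i)"
    if "x \<in> G" for x u y
  proof -
    define v w where "v = \<psi> (iv x) u" and "w = \<rho> (iv x) y"
    have "\<psi> x v = u" "\<rho> x w = y"
      unfolding v_def w_def using LG \<psi>_action \<rho>_action \<open>x \<in> G\<close>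
      by (simp_all add: smooth_left_action_inverse_cancel)
    moreover have "mul x e = x"
      using LG \<open>x \<in> G\<close> unfolding lie_group_def by blast
    ultimately have F_x: "F x u y = DL G mul x e (F e v w)" and f_x: "f x u = DL G mul x e (f e v)"
      using F_inv f_inv \<open>x \<in> G\<close> eG by (metis, metis)
    obtain D where "linear D" and D: "\<forall>t\<in>tangent_space G e. DL G mul x e t = D t"
      using DL_linear_on_tangent_space[OF mul_smooth \<open>x \<in> G\<close> eG] by blast
    show ?thesis
      unfolding v_def[symmetric] w_def[symmetric] L_expansion F_x f_x
      using D F_e f_e span_diff[OF F_e f_e] W_span
      by (simp add: linear_diff[OF \<open>linear D\<close>])
  qed
  moreover have "\<forall>i\<in>{1..n}. \<forall>v. L i v (h e v) = 0"
    using F_pre eG unfolding L_def by (simp add: real_vector.representation_zero)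
  ultimately show ?thesis by blast
qed

end
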